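(* Let $d$ be odd and let $\sigma_\triangle$ be a sign pattern of length $d+1$ with which the pair $(2,1)$ is compatible. Suppose that in $\sigma_\triangle$ there is a monomial $x^{2m}$ ($m\geq1$) and a monomial $x^{2n-1}$ ($n\ge 1$, $2n-1<d$) both with negative sign (either $2m<2n-1$ or $2n-1<2m$). For a polynomial realizing $(\sigma_\triangle,(2,1))$ denote its real roots by $-\beta<0<\alpha_1<\alpha_2$. Then for each of the five possibilities $$\beta<\alpha_1<\alpha_2,\quad \beta=\alpha_1<\alpha_2,\quad \alpha_1<\beta<\alpha_2,\quad \alpha_1<\alpha_2=\beta,\quad \alpha_1<\alpha_2<\beta,$$ there exists a polynomial realizing the couple $(\sigma_\triangle,(2,1))$ whose roots satisfy that possibility.
   Context: A sign pattern of length $d+1$ is a sequence of $d+1$ symbols $+$/$-$ beginning with $+$; a monic polynomial $x^d+\sum_{j<d}a_jx^j$ with all $a_j\neq0$ defines the sign pattern $(+,\operatorname{sign}(a_{d-1}),\ldots,\operatorname{sign}(a_0))$, and the sign of the monomial $x^j$ in the pattern is the entry corresponding to $a_j$. For a sign pattern with $c$ sign changes and $p$ sign preservations ($c+p=d$), a pair $(pos,neg)$ is compatible with it if $pos\le c$, $c-pos$ even, $neg\le p$, $p-neg$ even. A monic polynomial realizes the couple $(\sigma,(pos,neg))$ if it has all coefficients non-zero, defines $\sigma$, has exactly $pos$ positive and $neg$ negative real roots, all simple, and no other real roots. *)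

theory Defs
  imports "HOL-Computational_Algebra.Polynomial"
begin

text \<open>A sign pattern of length d+1 is a list of booleans (True = +, False = -);
  entry 0 corresponds to the leading coefficient (x^d), entry (d - j) to x^j.\<close>

definition sign_pattern :: "bool list \<Rightarrow> bool" where
  "sign_pattern \<sigma> \<longleftrightarrow> \<sigma> \<noteq> [] \<and> hd \<sigma> = True"

definition sp_deg :: "bool list \<Rightarrow> nat" where
  "sp_deg \<sigma> = length \<sigma> - 1"

definition sp_sign :: "bool list \<Rightarrow> nat \<Rightarrow> bool" where
  "sp_sign \<sigma> j = \<sigma> ! (sp_deg \<sigma> - j)"

definition sign_changes :: "bool list \<Rightarrow> nat" where
  "sign_changes \<sigma> = card {i. i < sp_deg \<sigma> \<and> \<sigma> ! i \<noteq> \<sigma> ! Suc i}"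

definition sign_preservations :: "bool list \<Rightarrow> nat" where
  "sign_preservations \<sigma> = card {i. i < sp_deg \<sigma> \<and> \<sigma> ! i = \<sigma> ! Suc i}"

definition compatible :: "bool list \<Rightarrow> nat \<Rightarrow> nat \<Rightarrow> bool" where
  "compatible \<sigma> pos neg \<longleftrightarrow>
     pos \<le> sign_changes \<sigma> \<and> even (sign_changes \<sigma> - pos) \<and>
     neg \<le> sign_preservations \<sigma> \<and> even (sign_preservations \<sigma> - neg)"

definition defines_pattern :: "real poly \<Rightarrow> bool list \<Rightarrow> bool" where
  "defines_pattern P \<sigma> \<longleftrightarrow>
     degree P = sp_deg \<sigma> \<and> lead_coeff P = 1 \<and>
     (\<forall>j \<le> sp_deg \<sigma>. coeff P j \<noteq> 0 \<and> (coeff P j > 0 \<longleftrightarrow> sp_sign \<sigma> j))"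

definition realizes :: "real poly \<Rightarrow> bool list \<Rightarrow> nat \<Rightarrow> nat \<Rightarrow> bool" where
  "realizes P \<sigma> pos neg \<longleftrightarrow>
     defines_pattern P \<sigma> \<and>
     card {x. x > 0 \<and> poly P x = 0} = pos \<and>
     card {x. x < 0 \<and> poly P x = 0} = neg \<and>
     (\<forall>x. poly P x = 0 \<longrightarrow> order x P = 1) \<and>
     poly P 0 \<noteq> 0"

definition realizes_21_with_roots :: "real poly \<Rightarrow> bool list \<Rightarrow> real \<Rightarrow> real \<Rightarrow> real \<Rightarrow> bool" where
  "realizes_21_with_roots P \<sigma> \<beta> \<alpha>1 \<alpha>2 \<longleftrightarrow>
     realizes P \<sigma> 2 1 \<and> 0 < \<beta> \<and> 0 < \<alpha>1 \<and> \<alpha>1 < \<alpha>2 \<and>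
     {x. poly P x = 0} = {-\<beta>, \<alpha>1, \<alpha>2}"

end

(*
  Put a = 2n - 1 and b = 2m. Since a is odd and b, d - 1 are even, the polynomial
  T = x^d - x^a - A x^b + A vanishes at -1 and 1 for every A, and a unique A, which is
  positive, makes it vanish at a given t > 0, t \<noteq> 1, as well. On (0, \<infinity>) its derivative
  is x^(d-1) h(x) with h strictly increasing, so by Rolle T has exactly the simple real
  roots -1, 1, t, and T = K Q0 with K = (x + 1)(x - 1)(x - t) and Q0 > 0. T has the signs
  of the pattern at x^d, x^a, x^b, x^0 and no other monomials; adding \<epsilon> W for small
  \<epsilon> > 0, where W = K S carries the signs of the pattern at the missing monomials, yields
  a realization K (Q0 + \<epsilon> S) with the roots -1, 1, t. The choices t = 2 and t = 1/2 give
  \<beta> = \<alpha>1 and \<beta> = \<alpha>2, and shifting the factor x + \<beta> slightly, which keeps all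
  coefficient signs, gives the three strict orderings.
*)

theory Submission
  imports Defs "HOL-Computational_Algebra.Fundamental_Theorem_Algebra"
begin

lemma even_card_changes_iff:
  fixes g :: "nat \<Rightarrow> bool"
  shows "even (card {i. i < L \<and> g i \<noteq> g (Suc i)}) \<longleftrightarrow> g 0 = g L"
proof (induction L)
  case (Suc L)
  have "{i. i < Suc L \<and> g i \<noteq> g (Suc i)} =
      {i. i < L \<and> g i \<noteq> g (Suc i)} \<union> (if g L = g (Suc L) then {} else {L})"
    by (auto simp: less_Suc_eq)
  with Suc show ?case
    by (cases "g L = g (Suc L)") auto
qed simp

lemma sp_sign_deg:
  assumes "sign_pattern \<sigma>"
  shows "sp_sign \<sigma> (sp_deg \<sigma>)"
  using assms unfolding sign_pattern_def sp_sign_def by (metis diff_self_eq_0 hd_conv_nth)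

lemma sp_sign_0:
  assumes "sign_pattern \<sigma>" and "even (sign_changes \<sigma>)"
  shows "sp_sign \<sigma> 0"
proof -
  have "\<sigma> ! 0 = \<sigma> ! sp_deg \<sigma>"
    using assms(2) even_card_changes_iff[where g = "(!) \<sigma>"] by (simp add: sign_changes_def)
  then show ?thesis
    using sp_sign_deg[OF assms(1)] by (simp add: sp_sign_def)
qed

lemma eventually_defines_pattern_add_smult:
  fixes T W :: "real poly"
  assumes deg: "degree T = sp_deg \<sigma>" and lc: "lead_coeff T = 1" and degW: "degree W < sp_deg \<sigma>"
    and signs: "\<And>j. j \<le> sp_deg \<sigma> \<Longrightarrow>
      if coeff T j = 0 then coeff W j \<noteq> 0 \<and> (coeff W j > 0 \<longleftrightarrow> sp_sign \<sigma> j)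
      else coeff T j > 0 \<longleftrightarrow> sp_sign \<sigma> j"
  shows "eventually (\<lambda>\<epsilon>. defines_pattern (T + smult \<epsilon> W) \<sigma>) (at_right 0)"
proof -
  have deg_smult: "degree (smult \<epsilon> W) < degree T" for \<epsilon>
    using degW deg degree_smult_le[of \<epsilon> W] by linarith
  have coeff_sign: "eventually (\<lambda>\<epsilon>. coeff (T + smult \<epsilon> W) j \<noteq> 0 \<and>
      (coeff (T + smult \<epsilon> W) j > 0 \<longleftrightarrow> sp_sign \<sigma> j)) (at_right 0)"
    if "j \<le> sp_deg \<sigma>" for j
  proof (cases "coeff T j = 0")
    case True
    with signs[OF that] show ?thesis
      by (auto intro: eventually_mono[OF eventually_at_right_less] simp: zero_less_mult_iff)
  next
    case False
    have lim: "((\<lambda>\<epsilon>. coeff (T + smult \<epsilon> W) j) \<longlongrightarrow> coeff T j) (at_right 0)"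
      by (auto intro!: tendsto_eq_intros)
    show ?thesis
    proof (cases "coeff T j > 0")
      case True
      with signs[OF that] show ?thesis
        by (auto intro: eventually_mono[OF order_tendstoD(1)[OF lim True]])
    next
      case pos: False
      with False have "coeff T j < 0" by simp
      with signs[OF that] pos show ?thesis
        by (auto intro: eventually_mono[OF order_tendstoD(2)[OF lim]])
    qed
  qed
  have "eventually (\<lambda>\<epsilon>. \<forall>j\<in>{..sp_deg \<sigma>}. coeff (T + smult \<epsilon> W) j \<noteq> 0 \<and>
      (coeff (T + smult \<epsilon> W) j > 0 \<longleftrightarrow> sp_sign \<sigma> j)) (at_right 0)"
    using coeff_sign by (intro eventually_ball_finite) auto
  then show ?thesis
    using degree_add_eq_left[OF deg_smult] lead_coeff_add_le[OF deg_smult] deg lc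
    by (auto simp: defines_pattern_def add.commute elim!: eventually_mono)
qed

lemma eventually_defines_pattern_shift_root:
  fixes R :: "real poly"
  assumes dp: "defines_pattern ([:\<beta>, 1:] * R) \<sigma>"
  shows "eventually (\<lambda>\<delta>. defines_pattern ([:\<beta> + \<delta>, 1:] * R) \<sigma> \<and>
    defines_pattern ([:\<beta> - \<delta>, 1:] * R) \<sigma>) (at_right 0)"
proof -
  let ?T = "[:\<beta>, 1:] * R"
  have "R \<noteq> 0"
    using dp by (auto simp: defines_pattern_def)
  then have "degree ?T = Suc (degree R)"
    by (subst degree_mult_eq) auto
  then have degR: "degree R < sp_deg \<sigma>"
    using dp by (simp add: defines_pattern_def)
  have "eventually (\<lambda>\<delta>. defines_pattern (?T + smult \<delta> W) \<sigma>) (at_right 0)"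
    if "degree W < sp_deg \<sigma>" for W
    using dp that by (intro eventually_defines_pattern_add_smult) (auto simp: defines_pattern_def)
  from this[of R] this[of "- R"] degR
  have "eventually (\<lambda>\<delta>. defines_pattern (?T + smult \<delta> R) \<sigma> \<and>
      defines_pattern (?T + smult \<delta> (- R)) \<sigma>) (at_right 0)"
    by (simp add: eventually_conj)
  moreover have "[:\<beta> + \<delta>, 1:] * R = ?T + smult \<delta> R" "[:\<beta> - \<delta>, 1:] * R = ?T + smult \<delta> (- R)" for \<delta>
    by (simp_all add: algebra_simps flip: smult_add_left)
  ultimately show ?thesis
    by (simp only:)
qed

lemma order_linear_factor_mult:
  fixes Q :: "'a::idom poly"
  assumes "Q \<noteq> 0"
  shows "order x ([:-c, 1:] * Q) = (if x = c then 1 else 0) + order x Q"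
proof -
  have "order x ([:-c, 1:] * Q) = order x [:-c, 1:] + order x Q"
    using assms by (intro order_mult no_zero_divisors) simp_all
  moreover have "order x [:-c, 1:] = (if x = c then 1 else 0)"
    using order_power_n_n[of c 1] by (auto intro: order_0I)
  ultimately show ?thesis
    by simp
qed

lemma realizes_21_with_rootsI:
  fixes Q :: "real poly"
  assumes Q: "\<forall>x. poly Q x \<noteq> 0"
    and dp: "defines_pattern ([:\<beta>, 1:] * ([:-\<alpha>1, 1:] * ([:-\<alpha>2, 1:] * Q))) \<sigma>"
    and roots: "0 < \<beta>" "0 < \<alpha>1" "\<alpha>1 < \<alpha>2"
  shows "realizes_21_with_roots ([:\<beta>, 1:] * ([:-\<alpha>1, 1:] * ([:-\<alpha>2, 1:] * Q))) \<sigma> \<beta> \<alpha>1 \<alpha>2"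
proof -
  let ?P = "[:-(-\<beta>), 1:] * ([:-\<alpha>1, 1:] * ([:-\<alpha>2, 1:] * Q))"
  have "poly ?P x = (x - -\<beta>) * ((x - \<alpha>1) * ((x - \<alpha>2) * poly Q x))" for x
    by (simp add: algebra_simps)
  then have zero_iff: "poly ?P x = 0 \<longleftrightarrow> x = -\<beta> \<or> x = \<alpha>1 \<or> x = \<alpha>2" for x
    using Q by auto
  have nonzero: "Q \<noteq> 0" "[:-\<alpha>2, 1:] * Q \<noteq> 0" "[:-\<alpha>1, 1:] * ([:-\<alpha>2, 1:] * Q) \<noteq> 0"
    using Q by (auto simp del: mult_pCons_left)
  have "order x ?P = (if x = -\<beta> then 1 else 0) + ((if x = \<alpha>1 then 1 else 0) +
      ((if x = \<alpha>2 then 1 else 0) + order x Q))" for x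
    by (simp only: order_linear_factor_mult nonzero not_False_eq_True)
  moreover have "order x Q = 0" for x
    using Q by (simp add: order_0I)
  ultimately have "poly ?P x = 0 \<Longrightarrow> order x ?P = 1" for x
    using zero_iff roots by auto
  moreover have "{x. x > 0 \<and> poly ?P x = 0} = {\<alpha>1, \<alpha>2}" "{x. x < 0 \<and> poly ?P x = 0} = {-\<beta>}"
    "{x. poly ?P x = 0} = {-\<beta>, \<alpha>1, \<alpha>2}"
    using zero_iff roots by auto
  ultimately show ?thesis
    using dp roots zero_iff[of 0]
    by (simp add: realizes_21_with_roots_def realizes_def)
qed

lemma eventually_realizes_21_shift_neg_root:
  fixes Q :: "real poly"
  assumes Q: "\<forall>x. poly Q x \<noteq> 0"
    and dp: "defines_pattern ([:\<beta>, 1:] * ([:-\<alpha>1, 1:] * ([:-\<alpha>2, 1:] * Q))) \<sigma>"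
    and roots: "0 < \<beta>" "0 < \<alpha>1" "\<alpha>1 < \<alpha>2"
  shows "eventually (\<lambda>\<delta>.
      realizes_21_with_roots ([:\<beta> + \<delta>, 1:] * ([:-\<alpha>1, 1:] * ([:-\<alpha>2, 1:] * Q))) \<sigma> (\<beta> + \<delta>) \<alpha>1 \<alpha>2 \<and>
      realizes_21_with_roots ([:\<beta> - \<delta>, 1:] * ([:-\<alpha>1, 1:] * ([:-\<alpha>2, 1:] * Q))) \<sigma> (\<beta> - \<delta>) \<alpha>1 \<alpha>2)
    (at_right 0)"
proof -
  have "eventually (\<lambda>\<delta>. 0 < \<delta> \<and> \<delta> < \<beta>) (at_right 0)"
    using eventually_at_right_less order_tendstoD(2)[OF tendsto_ident_at \<open>0 < \<beta>\<close>]
    by (rule eventually_conj)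
  with eventually_defines_pattern_shift_root[OF dp] show ?thesis
    by eventually_elim (use Q roots in \<open>simp add: realizes_21_with_rootsI del: mult_pCons_left\<close>)
qed

lemma poly_pos_if_no_real_roots:
  fixes Q :: "real poly"
  assumes roots: "\<forall>x. poly Q x \<noteq> 0" and lc: "lead_coeff Q > 0"
  shows "poly Q x > 0"
proof (rule ccontr)
  assume "\<not> poly Q x > 0"
  with roots have neg: "poly Q x < 0"
    by (meson linorder_neqE_linordered_idom)
  obtain y0 where "\<forall>y\<ge>y0. poly Q y \<ge> lead_coeff Q"
    using poly_pinfty_gt_lc[OF lc] by blast
  then have "poly Q (max y0 (x + 1)) > 0"
    using lc by (meson max.cobounded1 order_less_le_trans)
  moreover have "x < max y0 (x + 1)"
    by simp
  ultimately have "\<exists>z. poly Q z = 0"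
    using poly_IVT_pos[of x "max y0 (x + 1)" Q] neg by blast
  with roots show False
    by blast
qed

lemma poly_abs_bounded_by_pos_poly:
  fixes Q S :: "real poly"
  assumes pos: "\<forall>x. poly Q x > 0" and deg: "degree S < degree Q"
  shows "\<exists>M. \<forall>x. \<bar>poly S x\<bar> \<le> M * poly Q x"
proof -
  have "eventually (\<lambda>x. dist (poly S x / poly Q x) 0 < 1) at_infinity"
    using poly_divide_tendsto_0_at_infinity[OF deg] by (rule tendstoD) simp
  then obtain b where b: "\<And>x. b \<le> \<bar>x\<bar> \<Longrightarrow> \<bar>poly S x / poly Q x\<bar> < 1"
    by (auto simp: eventually_at_infinity)
  have "continuous_on {-\<bar>b\<bar>..\<bar>b\<bar>} (\<lambda>x. \<bar>poly S x\<bar> / poly Q x)"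
    using pos by (intro continuous_intros) (metis less_irrefl)
  then obtain x0 where x0: "\<And>x. x \<in> {-\<bar>b\<bar>..\<bar>b\<bar>} \<Longrightarrow> \<bar>poly S x\<bar> / poly Q x \<le> \<bar>poly S x0\<bar> / poly Q x0"
    using continuous_attains_sup[of "{-\<bar>b\<bar>..\<bar>b\<bar>}"] by fastforce
  have "\<bar>poly S x\<bar> / poly Q x \<le> max 1 (\<bar>poly S x0\<bar> / poly Q x0)" for x
  proof (cases "b \<le> \<bar>x\<bar>")
    case True
    then have "\<bar>poly S x\<bar> / poly Q x < 1"
      using b[OF True] pos[rule_format, of x] by (simp add: abs_divide)
    then show ?thesis
      by linarith
  next
    case False
    then have "x \<in> {-\<bar>b\<bar>..\<bar>b\<bar>}"
      by auto
    then show ?thesis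
      using x0 by fastforce
  qed
  then have "\<bar>poly S x\<bar> \<le> max 1 (\<bar>poly S x0\<bar> / poly Q x0) * poly Q x" for x
    using pos by (simp add: divide_le_eq)
  then show ?thesis
    by blast
qed

lemma eventually_poly_pos_add_smult:
  fixes Q S :: "real poly"
  assumes pos: "\<forall>x. poly Q x > 0" and deg: "S = 0 \<or> degree S < degree Q"
  shows "eventually (\<lambda>\<epsilon>. \<forall>x. poly (Q + smult \<epsilon> S) x > 0) (nhds 0)"
proof -
  obtain M where M: "\<And>x. \<bar>poly S x\<bar> \<le> M * poly Q x"
    using deg poly_abs_bounded_by_pos_poly[OF pos] pos by (metis abs_zero less_eq_real_def mult_zero_left poly_0)
  have "((\<lambda>\<epsilon>. \<bar>\<epsilon>\<bar> * M) \<longlongrightarrow> \<bar>0\<bar> * M) (nhds 0)"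
    by (intro tendsto_intros filterlim_ident)
  then have "eventually (\<lambda>\<epsilon>. \<bar>\<epsilon>\<bar> * M < 1) (nhds 0)"
    by (rule order_tendstoD) simp
  then show ?thesis
  proof eventually_elim
    case (elim \<epsilon>)
    show ?case
    proof
      fix x
      have "\<bar>\<epsilon> * poly S x\<bar> \<le> \<bar>\<epsilon>\<bar> * M * poly Q x"
        using mult_left_mono[OF M[of x], of "\<bar>\<epsilon>\<bar>"] by (simp add: abs_mult mult.assoc)
      also have "\<dots> < poly Q x"
        using elim pos[rule_format, of x] by simp
      finally show "poly (Q + smult \<epsilon> S) x > 0"
        by simp
    qed
  qed
qed

lemma poly_Rolle:
  fixes p :: "real poly"
  assumes "r < s" "poly p r = 0" "poly p s = 0"
  shows "\<exists>c. r < c \<and> c < s \<and> poly (pderiv p) c = 0"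
  using poly_MVT[OF assms(1), of p] assms by auto

locale three_root_quadrinomial =
  fixes a b d :: nat and t :: real
  assumes odd_a: "odd a" and a_less_d: "a < d"
    and even_b: "even b" and b_pos: "0 < b" and b_less_d: "b < d"
    and odd_d: "odd d" and t_pos: "0 < t" and t_neq_1: "t \<noteq> 1"
begin

definition A :: real where
  "A = (t ^ d - t ^ a) / (t ^ b - 1)"

definition T :: "real poly" where
  "T = monom 1 d - monom 1 a - monom A b + [:A:]"

lemma a_pos: "0 < a"
  using odd_a by (cases a) auto

lemma A_pos: "A > 0"
proof (cases "t > 1")
  case True
  then have "t ^ a < t ^ d" "1 < t ^ b"
    using power_strict_increasing[OF a_less_d] a_less_d b_pos by auto
  then show ?thesis
    by (simp add: A_def)
next
  case False
  with t_neq_1 have "t < 1"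
    by simp
  then have "t ^ d < t ^ a" "t ^ b < 1"
    using power_strict_decreasing[OF a_less_d t_pos] t_pos b_pos by (auto simp: power_less_one_iff)
  then show ?thesis
    by (simp add: A_def divide_neg_neg)
qed

lemma t_pow_b_neq_1: "t ^ b \<noteq> 1"
  using power_eq_iff_eq_base[of b t 1] t_pos t_neq_1 b_pos by simp

lemma poly_T: "poly T x = x ^ d - x ^ a - A * x ^ b + A"
  by (simp add: T_def poly_monom)

lemma poly_pderiv_T:
  "poly (pderiv T) x = real d * x ^ (d - 1) - real a * x ^ (a - 1) - A * real b * x ^ (b - 1)"
  by (simp add: T_def pderiv_add pderiv_diff pderiv_monom poly_monom)

lemma coeff_T:
  "coeff T j = (if j = d then 1 else 0) - (if j = a then 1 else 0) - (if j = b then A else 0)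
    + (if j = 0 then A else 0)"
  by (simp add: T_def coeff_monom coeff_pCons split: nat.split)

lemma degree_T: "degree T = d" and lead_coeff_T: "lead_coeff T = 1"
proof -
  have "coeff T j = 0" if "j > d" for j
    using that a_less_d b_less_d by (simp add: coeff_T)
  moreover have "coeff T d = 1"
    using a_less_d b_less_d by (simp add: coeff_T)
  ultimately show "degree T = d"
    by (intro antisym degree_le le_degree) auto
  then show "lead_coeff T = 1"
    using \<open>coeff T d = 1\<close> by simp
qed

lemma T_roots_basic: "poly T (-1) = 0" "poly T 1 = 0" "poly T t = 0"
  using odd_a even_b odd_d t_pow_b_neq_1 by (simp_all add: poly_T A_def field_simps)

lemma pderiv_T_pos_root_unique:
  assumes "0 < y" "0 < z" "poly (pderiv T) y = 0" "poly (pderiv T) z = 0"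
  shows "y = z"
proof -
  define h where "h x = real d - real a / x ^ (d - a) - A * real b / x ^ (d - b)" for x :: real
  have factor: "poly (pderiv T) x = x ^ (d - 1) * h x" if "0 < x" for x
  proof -
    have "x ^ (d - 1) = x ^ (a - 1) * x ^ (d - a)" "x ^ (d - 1) = x ^ (b - 1) * x ^ (d - b)"
      using a_pos a_less_d b_pos b_less_d by (simp_all flip: power_add)
    then show ?thesis
      using that by (simp add: poly_pderiv_T h_def field_simps)
  qed
  have strict_mono: "h x < h x'" if "0 < x" "x < x'" for x x'
  proof -
    have "real a / x' ^ (d - a) \<le> real a / x ^ (d - a)"
      using that a_less_d a_pos by (intro divide_left_mono power_strict_mono less_imp_le) auto
    moreover have "A * real b / x' ^ (d - b) < A * real b / x ^ (d - b)"
      using that b_less_d b_pos A_pos by (intro divide_strict_left_mono power_strict_mono) auto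
    ultimately show ?thesis
      by (simp add: h_def)
  qed
  have "h y = 0" "h z = 0"
    using assms factor by auto
  then show ?thesis
    using strict_mono assms(1,2) by (metis less_irrefl linorder_neqE_linordered_idom)
qed

lemma pderiv_T_root_between_pos_roots:
  assumes "0 < r" "r < s" "poly T r = 0" "poly T s = 0" "0 < c" "poly (pderiv T) c = 0"
  shows "r < c \<and> c < s"
proof -
  obtain c' where "r < c'" "c' < s" "poly (pderiv T) c' = 0"
    using poly_Rolle[OF assms(2-4)] by blast
  with assms pderiv_T_pos_root_unique[of c' c] show ?thesis
    by auto
qed

lemma pderiv_T_root_between_1_t:
  obtains c where "0 < c" "poly (pderiv T) c = 0" "min 1 t < c" "c < max 1 t"
  using poly_Rolle[of "min 1 t" "max 1 t" T] T_roots_basic t_pos t_neq_1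
  by (cases "1 < t") (auto simp: min_def max_def)

lemma T_pos_root_iff:
  assumes "0 < x"
  shows "poly T x = 0 \<longleftrightarrow> x = 1 \<or> x = t"
proof
  assume root: "poly T x = 0"
  obtain c where c: "0 < c" "poly (pderiv T) c = 0" "min 1 t < c" "c < max 1 t"
    by (rule pderiv_T_root_between_1_t)
  have between: "min r s < c \<and> c < max r s"
    if "0 < r" "0 < s" "r \<noteq> s" "poly T r = 0" "poly T s = 0" for r s
    using that pderiv_T_root_between_pos_roots[of r s c] pderiv_T_root_between_pos_roots[of s r c] c
    by (cases "r < s") (auto simp: min_def max_def)
  show "x = 1 \<or> x = t"
  proof (rule ccontr)
    assume "\<not> (x = 1 \<or> x = t)"
    then have "min x 1 < c \<and> c < max x 1" "min x t < c \<and> c < max x t"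
      using between[of x 1] between[of x t] assms root T_roots_basic t_pos by auto
    with c show False
      by (auto simp: min_def max_def split: if_splits)
  qed
qed (use T_roots_basic in auto)

lemma T_neg_root_iff:
  assumes "x < 0"
  shows "poly T x = 0 \<longleftrightarrow> x = -1"
proof
  assume root: "poly T x = 0"
  define y where "y = - x"
  have "y > 0"
    using assms by (simp add: y_def)
  have T_y: "poly T x = (y ^ a - y ^ d) + A * (1 - y ^ b)"
    using odd_a even_b odd_d by (simp add: poly_T y_def algebra_simps)
  consider "y < 1" | "y = 1" | "y > 1"
    by linarith
  then show "x = -1"
  proof cases
    case 1
    then have "y ^ d < y ^ a" "y ^ b < 1"
      using power_strict_decreasing[OF a_less_d \<open>y > 0\<close>] \<open>y > 0\<close> b_pos
      by (auto simp: power_less_one_iff)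
    moreover have "0 < A * (1 - y ^ b)"
      using A_pos \<open>y ^ b < 1\<close> by simp
    ultimately show ?thesis
      using root T_y by linarith
  next
    case 3
    then have "y ^ a < y ^ d" "1 < y ^ b"
      using power_strict_increasing[OF a_less_d] a_less_d b_pos by auto
    moreover have "A * (1 - y ^ b) < 0"
      using A_pos \<open>1 < y ^ b\<close> by (simp add: mult_pos_neg)
    ultimately show ?thesis
      using root T_y by linarith
  qed (simp add: y_def)
qed (use T_roots_basic in simp)

lemma T_root_iff: "poly T x = 0 \<longleftrightarrow> x = -1 \<or> x = 1 \<or> x = t"
proof -
  have "poly T 0 \<noteq> 0"
    using A_pos a_pos b_pos a_less_d by (simp add: poly_T power_0_left)
  then show ?thesis
    using T_pos_root_iff[of x] T_neg_root_iff[of x] t_pos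
    by (cases x "0 :: real" rule: linorder_cases) auto
qed

lemma pderiv_T_nonzero_at_root:
  assumes "poly T x = 0"
  shows "poly (pderiv T) x \<noteq> 0"
proof -
  consider "x = -1" | "x = 1 \<or> x = t"
    using assms T_root_iff by blast
  then show ?thesis
  proof cases
    case 1
    have "poly (pderiv T) (-1) = real d - real a + A * real b"
      using odd_a even_b odd_d a_pos b_pos by (simp add: poly_pderiv_T)
    moreover have "0 < A * real b" "real a < real d"
      using A_pos b_pos a_less_d by simp_all
    ultimately show ?thesis
      unfolding 1 by linarith
  next
    case 2
    obtain c where "0 < c" "poly (pderiv T) c = 0" "min 1 t < c" "c < max 1 t"
      by (rule pderiv_T_root_between_1_t)
    then show ?thesis
      using 2 t_pos pderiv_T_pos_root_unique[of x c] by (auto simp: min_def max_def split: if_splits)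
  qed
qed

end

lemma three_linear_factors_dvd:
  fixes P :: "'a::idom poly"
  assumes "poly P r1 = 0" "poly P r2 = 0" "poly P r3 = 0" "r1 \<noteq> r2" "r1 \<noteq> r3" "r2 \<noteq> r3"
  shows "[:-r1, 1:] * ([:-r2, 1:] * [:-r3, 1:]) dvd P"
proof -
  obtain P1 where P1: "P = [:-r1, 1:] * P1"
    using assms(1) by (metis poly_eq_0_iff_dvd dvdE)
  with assms(2,4) have "poly P1 r2 = 0"
    by simp
  then obtain P2 where P2: "P1 = [:-r2, 1:] * P2"
    by (metis poly_eq_0_iff_dvd dvdE)
  with assms(3,5,6) P1 have "poly P2 r3 = 0"
    by simp
  then obtain P3 where "P2 = [:-r3, 1:] * P3"
    by (metis poly_eq_0_iff_dvd dvdE)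
  with P1 P2 have "P = [:-r1, 1:] * ([:-r2, 1:] * [:-r3, 1:]) * P3"
    by (simp only: mult.assoc)
  then show ?thesis
    by (rule dvdI)
qed

locale quadrinomial_sign_pattern = three_root_quadrinomial +
  fixes \<sigma> :: "bool list"
  assumes sign_pattern: "sign_pattern \<sigma>" and length_\<sigma>: "length \<sigma> = d + 1"
    and even_sign_changes: "even (sign_changes \<sigma>)"
    and neg_a: "\<not> sp_sign \<sigma> a" and neg_b: "\<not> sp_sign \<sigma> b"
begin

definition Z :: "nat set" where
  "Z = {j. 0 < j \<and> j < d \<and> j \<noteq> a \<and> j \<noteq> b}"

definition V :: "real poly" where
  "V = (\<Sum>j\<in>Z. monom (if sp_sign \<sigma> j then 1 else -1) j)"

text \<open>\<open>p\<close>, \<open>q\<close>, \<open>r\<close> solve the linear system \<open>W(-1) = W(1) = W(t) = 0\<close>.\<close>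

definition p :: real where
  "p = (poly V 1 - poly V (-1)) / 2"

definition q :: real where
  "q = (poly V t - p * t ^ a - (poly V 1 + poly V (-1)) / 2) / (t ^ b - 1)"

definition r :: real where
  "r = q - (poly V 1 + poly V (-1)) / 2"

definition W :: "real poly" where
  "W = V - monom p a - monom q b + [:r:]"

definition K :: "real poly" where
  "K = [:1, 1:] * ([:-1, 1:] * [:-t, 1:])"

lemma sp_deg_\<sigma>: "sp_deg \<sigma> = d"
  using length_\<sigma> by (simp add: sp_deg_def)

lemma poly_W: "poly W x = poly V x - p * x ^ a - q * x ^ b + r"
  by (simp add: W_def poly_monom)

lemma W_roots: "poly W (-1) = 0" "poly W 1 = 0" "poly W t = 0"
  using odd_a even_b t_pow_b_neq_1 by (simp_all add: poly_W p_def q_def r_def field_simps)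

lemma coeff_W:
  "coeff W j = (if j \<in> Z then if sp_sign \<sigma> j then 1 else -1 else 0)
    - (if j = a then p else 0) - (if j = b then q else 0) + (if j = 0 then r else 0)"
  by (simp add: W_def V_def coeff_sum coeff_monom coeff_pCons Z_def split: nat.split)

lemma degree_W: "degree W < d"
proof -
  have "d \<ge> 2"
    using even_b b_pos b_less_d by presburger
  moreover have "coeff W j = 0" if "j \<ge> d" for j
    using that a_less_d b_less_d by (simp add: coeff_W Z_def)
  ultimately have "degree W \<le> d - 1"
    by (intro degree_le) auto
  with \<open>d \<ge> 2\<close> show ?thesis
    by simp
qed

lemma coeff_T_W_signs:
  assumes "j \<le> d"
  shows "if coeff T j = 0 then coeff W j \<noteq> 0 \<and> (coeff W j > 0 \<longleftrightarrow> sp_sign \<sigma> j)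
    else coeff T j > 0 \<longleftrightarrow> sp_sign \<sigma> j"
proof -
  have "a \<noteq> b"
    using odd_a even_b by auto
  have "sp_sign \<sigma> d" "sp_sign \<sigma> 0"
    using sp_sign_deg[OF sign_pattern] sp_sign_0[OF sign_pattern even_sign_changes] sp_deg_\<sigma>
    by simp_all
  moreover have "j = d \<or> j = 0 \<or> j = a \<or> j = b \<or> j \<in> Z"
    using assms by (auto simp: Z_def)
  ultimately show ?thesis
    using \<open>a \<noteq> b\<close> a_pos b_pos a_less_d b_less_d A_pos neg_a neg_b
    by (auto simp: coeff_T coeff_W Z_def)
qed

lemma K_dvd:
  assumes "poly P (-1) = 0" "poly P 1 = 0" "poly P t = 0"
  shows "K dvd P"
  using three_linear_factors_dvd[of P "-1" 1 t] assms t_pos t_neq_1 by (simp add: K_def)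

lemma degree_K: "degree K = 3" and lead_coeff_K: "lead_coeff K = 1"
  by (simp_all add: K_def degree_mult_eq lead_coeff_mult)

lemma T_eq_K_mult_pos:
  obtains Q0 where "T = K * Q0" "\<forall>x. poly Q0 x > 0"
proof -
  obtain Q0 where T: "T = K * Q0"
    using K_dvd[OF T_roots_basic] by (elim dvdE)
  have "poly Q0 x \<noteq> 0" for x
  proof
    assume "poly Q0 x = 0"
    then have "poly T x = 0" "poly (pderiv T) x = poly K x * poly (pderiv Q0) x"
      by (simp_all add: T pderiv_mult)
    moreover from this(1) have "poly K x = 0"
      using T_root_iff by (auto simp: K_def)
    ultimately show False
      using pderiv_T_nonzero_at_root by simp
  qed
  moreover have "lead_coeff Q0 = 1"
    using lead_coeff_T lead_coeff_K by (simp add: T lead_coeff_mult)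
  ultimately show thesis
    using that[OF T] poly_pos_if_no_real_roots by simp
qed

lemma exists_root_free_cofactor_realization:
  "\<exists>Q. (\<forall>x. poly Q x \<noteq> 0) \<and> defines_pattern ([:1, 1:] * ([:-1, 1:] * ([:-t, 1:] * Q))) \<sigma>"
proof -
  obtain Q0 where T: "T = K * Q0" and Q0_pos: "\<forall>x. poly Q0 x > 0"
    by (rule T_eq_K_mult_pos)
  obtain S where W: "W = K * S"
    using K_dvd[OF W_roots] by (elim dvdE)
  have "K \<noteq> 0" "Q0 \<noteq> 0"
    using degree_K T lead_coeff_T by auto
  have "S = 0 \<or> degree S < degree Q0"
  proof (cases "S = 0")
    case False
    then have "degree K + degree S < degree K + degree Q0"
      using degree_W degree_T \<open>K \<noteq> 0\<close> \<open>Q0 \<noteq> 0\<close> by (simp add: T W degree_mult_eq)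
    then show ?thesis
      by simp
  qed simp
  then have "eventually (\<lambda>\<epsilon>. \<forall>x. poly (Q0 + smult \<epsilon> S) x > 0) (at_right 0)"
    unfolding eventually_at_filter by (rule eventually_mono[OF eventually_poly_pos_add_smult[OF Q0_pos]]) simp
  moreover have "eventually (\<lambda>\<epsilon>. defines_pattern (T + smult \<epsilon> W) \<sigma>) (at_right 0)"
    using degree_T lead_coeff_T degree_W coeff_T_W_signs sp_deg_\<sigma>
    by (intro eventually_defines_pattern_add_smult) simp_all
  ultimately obtain \<epsilon> where "\<forall>x. poly (Q0 + smult \<epsilon> S) x > 0"
    "defines_pattern (T + smult \<epsilon> W) \<sigma>"
    using eventually_happens'[OF trivial_limit_at_right_real eventually_conj] by blast
  moreover have "T + smult \<epsilon> W = [:1, 1:] * ([:-1, 1:] * ([:-t, 1:] * (Q0 + smult \<epsilon> S)))"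
    unfolding T W K_def by (simp only: distrib_left mult_smult_right mult.assoc)
  ultimately show ?thesis
    by (metis less_irrefl)
qed

end

theorem theorem4:
  fixes \<sigma> :: "bool list" and d m n :: nat
  assumes "sign_pattern \<sigma>" and "length \<sigma> = d + 1" and "odd d"
    and "compatible \<sigma> 2 1"
    and "m \<ge> 1" and "2 * m \<le> d" and "\<not> sp_sign \<sigma> (2 * m)"
    and "n \<ge> 1" and "2 * n - 1 < d" and "\<not> sp_sign \<sigma> (2 * n - 1)"
  shows "(\<exists>P \<beta> \<alpha>1 \<alpha>2. realizes_21_with_roots P \<sigma> \<beta> \<alpha>1 \<alpha>2 \<and> \<beta> < \<alpha>1 \<and> \<alpha>1 < \<alpha>2)
       \<and> (\<exists>P \<beta> \<alpha>1 \<alpha>2. realizes_21_with_roots P \<sigma> \<beta> \<alpha>1 \<alpha>2 \<and> \<beta> = \<alpha>1 \<and> \<alpha>1 < \<alpha>2)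
       \<and> (\<exists>P \<beta> \<alpha>1 \<alpha>2. realizes_21_with_roots P \<sigma> \<beta> \<alpha>1 \<alpha>2 \<and> \<alpha>1 < \<beta> \<and> \<beta> < \<alpha>2)
       \<and> (\<exists>P \<beta> \<alpha>1 \<alpha>2. realizes_21_with_roots P \<sigma> \<beta> \<alpha>1 \<alpha>2 \<and> \<alpha>1 < \<alpha>2 \<and> \<alpha>2 = \<beta>)
       \<and> (\<exists>P \<beta> \<alpha>1 \<alpha>2. realizes_21_with_roots P \<sigma> \<beta> \<alpha>1 \<alpha>2 \<and> \<alpha>1 < \<alpha>2 \<and> \<alpha>2 < \<beta>)"
proof -
  have "quadrinomial_sign_pattern (2 * n - 1) (2 * m) d t \<sigma>" if "0 < t" "t \<noteq> 1" for t :: real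
    using assms that by unfold_locales (auto simp: compatible_def le_less)
  note realization = quadrinomial_sign_pattern.exists_root_free_cofactor_realization[OF this]
  obtain Q1 where Q1: "\<forall>x. poly Q1 x \<noteq> 0"
    and dp1: "defines_pattern ([:1, 1:] * ([:-1, 1:] * ([:-2, 1:] * Q1))) \<sigma>"
    using realization[of 2] by auto
  obtain Q2 where Q2: "\<forall>x. poly Q2 x \<noteq> 0"
    and "defines_pattern ([:1, 1:] * ([:-1, 1:] * ([:-(1/2), 1:] * Q2))) \<sigma>"
    using realization[of "1/2"] by auto
  then have dp2: "defines_pattern ([:1, 1:] * ([:-(1/2), 1:] * ([:-1, 1:] * Q2))) \<sigma>"
    by (subst mult.left_commute)
  have "eventually (\<lambda>\<delta>. 0 < \<delta> \<and> \<delta> < 1) (at_right (0 :: real))"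
    using eventually_at_right_less by (rule eventually_conj) (rule order_tendstoD(2)[OF tendsto_ident_at], simp)
  from eventually_conj[OF this eventually_realizes_21_shift_neg_root[OF Q1 dp1]]
  obtain \<delta>1 where \<delta>1: "0 < \<delta>1" "\<delta>1 < 1"
    and below: "realizes_21_with_roots ([:1 - \<delta>1, 1:] * ([:-1, 1:] * ([:-2, 1:] * Q1))) \<sigma> (1 - \<delta>1) 1 2"
    and between: "realizes_21_with_roots ([:1 + \<delta>1, 1:] * ([:-1, 1:] * ([:-2, 1:] * Q1))) \<sigma> (1 + \<delta>1) 1 2"
    using eventually_happens'[OF trivial_limit_at_right_real] by auto
  from eventually_conj[OF eventually_at_right_less eventually_realizes_21_shift_neg_root[OF Q2 dp2]]
  obtain \<delta>2 where \<delta>2: "0 < \<delta>2"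
    and above: "realizes_21_with_roots ([:1 + \<delta>2, 1:] * ([:-(1/2), 1:] * ([:-1, 1:] * Q2))) \<sigma> (1 + \<delta>2) (1/2) 1"
    using eventually_happens'[OF trivial_limit_at_right_real] by auto
  have equal_low: "realizes_21_with_roots ([:1, 1:] * ([:-1, 1:] * ([:-2, 1:] * Q1))) \<sigma> 1 1 2"
    and equal_high: "realizes_21_with_roots ([:1, 1:] * ([:-(1/2), 1:] * ([:-1, 1:] * Q2))) \<sigma> 1 (1/2) 1"
    using realizes_21_with_rootsI[OF Q1 dp1] realizes_21_with_rootsI[OF Q2 dp2] by simp_all
  moreover have "1 - \<delta>1 < 1" "1 < 1 + \<delta>1" "1 + \<delta>1 < (2 :: real)" "1 < 1 + \<delta>2"
    using \<delta>1 \<delta>2 by simp_all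
  ultimately show ?thesis
    using below between above by (intro conjI; fastforce)
qed

end
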